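(* Let $\Gamma\in\mathbb{R}^{n\times m}$ and let $R:\mathbb{R}^n_{\ge0}\to\mathbb{R}^m$ be locally Lipschitz such that $\dot S=\Gamma R(S)$ leaves $\mathbb{R}^n_{\ge0}$ invariant and is forward complete; fix $\sigma\in\mathbb{R}^n_{\ge0}$ and consider $\dot x=R(\sigma+\Gamma x)$ on $X_\sigma=\{x\in\mathbb{R}^m:\sigma+\Gamma x\ge0\}$. Suppose $\Gamma$ has rank exactly $m-1$, with kernel spanned by a unit vector $v$ all of whose entries are positive. Let $x(t)$, $t\ge0$, be a solution of $\dot x=R(\sigma+\Gamma x)$ and $\pi_v(x)=x-(v'x)v$. Then $\Gamma x(t)$ is bounded if and only if $\pi_v x(t)$ is bounded.
   Context: Inequalities between vectors are componentwise; prime denotes transpose. *)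

theory Defs
  imports "HOL-Analysis.Analysis"
begin

definition nonneg_orthant :: "(real^'n) set" where
  "nonneg_orthant = {S. \<forall>i. 0 \<le> S $ i}"

definition locally_lipschitz_on :: "('a::metric_space) set \<Rightarrow> ('a \<Rightarrow> 'b::metric_space) \<Rightarrow> bool" where
  "locally_lipschitz_on D f \<longleftrightarrow>
     (\<forall>x\<in>D. \<exists>u>0. \<exists>L. L-lipschitz_on (cball x u \<inter> D) f)"

definition invariant_forward_complete :: "real^'m^'n \<Rightarrow> (real^'n \<Rightarrow> real^'m) \<Rightarrow> bool" where
  "invariant_forward_complete \<Gamma> R \<longleftrightarrow>
     (\<forall>S0\<in>nonneg_orthant. \<exists>S::real \<Rightarrow> real^'n. S 0 = S0 \<and>
        (\<forall>t\<ge>0. S t \<in> nonneg_orthant \<and>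
           (S has_vector_derivative (\<Gamma> *v R (S t))) (at t within {0..})))"

definition X_sigma :: "real^'m^'n \<Rightarrow> real^'n \<Rightarrow> (real^'m) set" where
  "X_sigma \<Gamma> \<sigma> = {x. \<sigma> + \<Gamma> *v x \<in> nonneg_orthant}"

definition proj_v :: "real^'m \<Rightarrow> real^'m \<Rightarrow> real^'m" where
  "proj_v v x = x - (v \<bullet> x) *\<^sub>R v"

end

theory Submission
  imports Defs
begin

(* Since \<Gamma> v = 0 we have \<Gamma> x = \<Gamma> (\<pi>\<^sub>v x),
   so boundedness of \<pi>\<^sub>v x gives boundedness of \<Gamma> x.  Conversely \<pi>\<^sub>v x lies in the
   hyperplane orthogonal to v, on which \<Gamma> is injective and hence bounded below,
   |\<Gamma> y| \<ge> e |y| with e > 0. *)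

lemma inner_proj_v:
  assumes "norm v = 1"
  shows "v \<bullet> proj_v v z = 0"
  using assms by (simp add: proj_v_def inner_diff_right norm_eq_sqrt_inner)

lemma linear_proj_v:
  assumes "linear f" and "f v = 0"
  shows "f (proj_v v z) = f z"
  using assms by (simp add: proj_v_def linear_diff linear_scale)

lemma linear_bounded_below_on_orthogonal:
  fixes f :: "real^'m \<Rightarrow> 'b::euclidean_space"
  assumes "linear f" and kernel: "{y. f y = 0} = span {v}" and "norm v = 1"
  obtains e where "e > 0" and "\<And>y. v \<bullet> y = 0 \<Longrightarrow> e * norm y \<le> norm (f y)"
proof -
  let ?H = "{y::real^'m. v \<bullet> y = 0}"
  have "closed ?H" "subspace ?H"
    by (auto simp: closed_hyperplane subspace_def inner_add_right)
  moreover have "\<forall>y\<in>?H. f y = 0 \<longrightarrow> y = 0"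
  proof (intro ballI impI)
    fix y assume "y \<in> ?H" "f y = 0"
    then obtain c where "y = c *\<^sub>R v"
      using kernel by (auto simp: span_singleton)
    with \<open>y \<in> ?H\<close> \<open>norm v = 1\<close> show "y = 0"
      by (simp add: norm_eq_sqrt_inner)
  qed
  ultimately obtain e where "e > 0" "\<forall>y\<in>?H. e * norm y \<le> norm (f y)"
    using injective_imp_isometric[of ?H f] \<open>linear f\<close> linear_conv_bounded_linear by blast
  then show thesis using that by auto
qed

lemma bounded_linear_image_iff_bounded_proj_v:
  fixes f :: "real^'m \<Rightarrow> 'b::euclidean_space"
  assumes "linear f" and kernel: "{y. f y = 0} = span {v}" and "norm v = 1"
  shows "bounded (f ` X) \<longleftrightarrow> bounded (proj_v v ` X)"
proof -
  have "f v = 0" using kernel span_base[of v "{v}"] by blast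
  with \<open>linear f\<close> have f_proj_v: "f (proj_v v z) = f z" for z
    by (rule linear_proj_v)
  show ?thesis
  proof
    obtain e where "e > 0" and e: "\<And>y. v \<bullet> y = 0 \<Longrightarrow> e * norm y \<le> norm (f y)"
      using linear_bounded_below_on_orthogonal[OF assms] by blast
    assume "bounded (f ` X)"
    then obtain B where B: "\<And>z. z \<in> X \<Longrightarrow> norm (f z) \<le> B"
      by (auto simp: bounded_iff)
    have "norm (proj_v v z) \<le> B / e" if "z \<in> X" for z
    proof -
      have "e * norm (proj_v v z) \<le> norm (f (proj_v v z))"
        by (rule e[OF inner_proj_v[OF \<open>norm v = 1\<close>]])
      also have "\<dots> \<le> B"
        using B that by (simp add: f_proj_v)
      finally show ?thesis using \<open>e > 0\<close> by (simp add: field_simps)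
    qed
    then show "bounded (proj_v v ` X)" by (auto simp: bounded_iff)
  next
    assume "bounded (proj_v v ` X)"
    then have "bounded (f ` proj_v v ` X)"
      using bounded_linear_image \<open>linear f\<close> linear_conv_bounded_linear by blast
    then show "bounded (f ` X)"
      by (simp add: image_image f_proj_v)
  qed
qed

theorem lemma5:
  fixes \<Gamma> :: "real^'m^'n"
    and R :: "real^'n \<Rightarrow> real^'m"
    and \<sigma> :: "real^'n"
    and v :: "real^'m"
    and x :: "real \<Rightarrow> real^'m"
  assumes R_lip: "locally_lipschitz_on nonneg_orthant R"
    and inv_compl: "invariant_forward_complete \<Gamma> R"
    and sigma_nonneg: "\<sigma> \<in> nonneg_orthant"
    and rank_Gamma: "rank \<Gamma> = CARD('m) - 1"
    and kernel: "{y. \<Gamma> *v y = 0} = span {v}"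
    and v_unit: "norm v = 1"
    and v_pos: "\<forall>i. 0 < v $ i"
    and x_in: "\<forall>t\<ge>0. x t \<in> X_sigma \<Gamma> \<sigma>"
    and x_sol: "\<forall>t\<ge>0. (x has_vector_derivative R (\<sigma> + \<Gamma> *v x t)) (at t within {0..})"
  shows "bounded ((\<lambda>t. \<Gamma> *v x t) ` {0..}) \<longleftrightarrow> bounded ((\<lambda>t. proj_v v (x t)) ` {0..})"
  using bounded_linear_image_iff_bounded_proj_v[of "(*v) \<Gamma>" v "x ` {0..}"]
    kernel v_unit matrix_vector_mul_linear
  by (simp add: image_image)

end
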